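(* Let $\mathcal H$ be a separable Hilbert space, let $q,r,s\ge1$ satisfy $\frac1{2q}+\frac1{2r}=\frac1s$, let $(e_n)_{n\ge1}$ and $(f_n)_{n\ge1}$ be orthonormal bases of $\mathcal H$, and let $X\in\mathcal C_s$. (i) If $(\lambda_n)_{n\ge1}$ and $(\rho_n)_{n\ge1}$ are summable sequences of positive reals, then $$\sup_{\eta>0}\Big\|\Big(\eta I+\Big(\sum_{n=1}^\infty\lambda_n\Big)e_1\otimes e_1\Big)^{\frac1{2q}-\frac12}\sum_{n=1}^\infty\lambda_n^{\frac12-\frac1{2q}}\rho_n^{\frac1{2r}}\langle Xf_1,e_n\rangle f_n\otimes e_1\Big\|_s\le\Big(\sum_{n=1}^\infty\rho_n\Big)^{\frac1{2r}}\|Xf_1\|,$$ $$\Big\|\sum_{n=1}^\infty\lambda_n^{\frac12-\frac1{2q}}\rho_n^{\frac1{2r}}\langle Xf_1,e_n\rangle f_n\otimes e_1\Big\|_s\le\Big(\sum_{n=1}^\infty\lambda_n\Big)^{\frac12-\frac1{2q}}\Big(\sum_{n=1}^\infty\rho_n\Big)^{\frac1{2r}}\|Xf_1\|,$$ where the series converge in $\mathcal C_s$. (ii) Assume $q>1$. If $(\gamma_n)\in\ell^{\frac{2q}{q-1}}$ and $(w_n)\in\ell^{2r}$ are sequences of positive reals, then $$\sup_{\eta>0}\Big\|\Big(\eta I+\Big(\sum_{n=1}^\infty\gamma_n^{\frac{2q}{q-1}}\Big)e_1\otimes e_1\Big)^{\frac1{2q}-\frac12}\sum_{n=1}^\infty\gamma_nw_n\langle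 Xf_1,e_n\rangle f_n\otimes e_1\Big\|_s\le\Big(\sum_{n=1}^\infty w_n^{2r}\Big)^{\frac1{2r}}\|Xf_1\|,$$ $$\Big\|\sum_{n=1}^\infty\gamma_nw_n\langle Xf_1,e_n\rangle f_n\otimes e_1\Big\|_s\le\Big(\sum_{n=1}^\infty\gamma_n^{\frac{2q}{q-1}}\Big)^{\frac{q-1}{2q}}\Big(\sum_{n=1}^\infty w_n^{2r}\Big)^{\frac1{2r}}\|Xf_1\|.$$
   Context: For $g,f\in\mathcal H$, $g\otimes f$ denotes the rank-one operator $h\mapsto\langle h,g\rangle f$. $\mathcal C_s$ is the Schatten–von Neumann class with norm $\|\cdot\|_s$; sums are taken in $\mathcal C_s$ (convergence of partial sums in $\|\cdot\|_s$). $\|Xf_1\|$ is the Hilbert space norm of the vector $Xf_1$. *)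

theory Defs
  imports Complex_Main
begin

text \<open>The separable (infinite-dimensional) Hilbert space H is modelled concretely as
  l2(nat) with complex entries; operators are functions on vectors, only their
  values on l2 matter.\<close>

type_synonym vec = "nat \<Rightarrow> complex"
type_synonym op = "vec \<Rightarrow> vec"

definition l2 :: "vec set" where
  "l2 = {x. summable (\<lambda>n. (cmod (x n))\<^sup>2)}"

definition inner_l2 :: "vec \<Rightarrow> vec \<Rightarrow> complex" where
  "inner_l2 x y = (\<Sum>n. x n * cnj (y n))"

definition norm_l2 :: "vec \<Rightarrow> real" where
  "norm_l2 x = sqrt (\<Sum>n. (cmod (x n))\<^sup>2)"

definition orthonormal_basis :: "(nat \<Rightarrow> vec) \<Rightarrow> bool" where
  "orthonormal_basis e \<longleftrightarrow>
     (\<forall>n. e n \<in> l2) \<and>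
     (\<forall>m n. inner_l2 (e m) (e n) = (if m = n then 1 else 0)) \<and>
     (\<forall>x\<in>l2. (\<forall>n. inner_l2 x (e n) = 0) \<longrightarrow> x = (\<lambda>_. 0))"

definition bounded_op :: "op \<Rightarrow> bool" where
  "bounded_op T \<longleftrightarrow>
     (\<forall>x\<in>l2. T x \<in> l2) \<and>
     (\<forall>x\<in>l2. \<forall>y\<in>l2. \<forall>a b. T (\<lambda>n. a * x n + b * y n) = (\<lambda>n. a * T x n + b * T y n)) \<and>
     (\<exists>K. \<forall>x\<in>l2. norm_l2 (T x) \<le> K * norm_l2 x)"

definition opnorm :: "op \<Rightarrow> real" where
  "opnorm T = Sup {norm_l2 (T x) | x. x \<in> l2 \<and> norm_l2 x \<le> 1}"

definition op_diff :: "op \<Rightarrow> op \<Rightarrow> op" where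
  "op_diff A B = (\<lambda>x n. A x n - B x n)"

definition op_rank_le :: "op \<Rightarrow> nat \<Rightarrow> bool" where
  "op_rank_le F k \<longleftrightarrow> (\<exists>v :: nat \<Rightarrow> vec. (\<forall>i<k. v i \<in> l2) \<and>
       (\<forall>x\<in>l2. \<exists>c :: nat \<Rightarrow> complex. F x = (\<lambda>n. \<Sum>i<k. c i * v i n)))"

text \<open>Singular values s_0 \<ge> s_1 \<ge> ..., as approximation numbers
  s_k(T) = inf { ||T - F|| : rank F \<le> k } (these coincide with the singular values
  for compact operators on a Hilbert space).\<close>
definition sing_val :: "op \<Rightarrow> nat \<Rightarrow> real" where
  "sing_val T k = Inf {opnorm (op_diff T F) | F. bounded_op F \<and> op_rank_le F k}"

definition schatten_class :: "real \<Rightarrow> op \<Rightarrow> bool" where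
  "schatten_class s T \<longleftrightarrow> bounded_op T \<and> summable (\<lambda>k. sing_val T k powr s)"

definition schatten_norm :: "real \<Rightarrow> op \<Rightarrow> real" where
  "schatten_norm s T = (\<Sum>k. sing_val T k powr s) powr (1 / s)"

definition schatten_sums :: "real \<Rightarrow> (nat \<Rightarrow> op) \<Rightarrow> op \<Rightarrow> bool" where
  "schatten_sums s A S \<longleftrightarrow> schatten_class s S \<and> (\<forall>i. schatten_class s (A i)) \<and>
     (\<lambda>N. schatten_norm s (op_diff S (\<lambda>x n. \<Sum>i<N. A i x n))) \<longlonglongrightarrow> 0"

definition tensor :: "vec \<Rightarrow> vec \<Rightarrow> op" where
  "tensor g f = (\<lambda>h n. inner_l2 h g * f n)"

text \<open>Continuous functional calculus for a self-adjoint operator A, whose spectrum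
  lies in [m, M] with m, M the bounds of its numerical range: f(A) is the (unique,
  for f continuous on [m,M]) bounded operator B with ||p(A) - B|| \<le> sup_[m,M] |p - f|
  for every real polynomial p.\<close>
definition num_lo :: "op \<Rightarrow> real" where
  "num_lo A = Inf {Re (inner_l2 (A x) x) | x. x \<in> l2 \<and> norm_l2 x = 1}"

definition num_hi :: "op \<Rightarrow> real" where
  "num_hi A = Sup {Re (inner_l2 (A x) x) | x. x \<in> l2 \<and> norm_l2 x = 1}"

definition poly_real :: "real list \<Rightarrow> real \<Rightarrow> real" where
  "poly_real c t = (\<Sum>i<length c. c ! i * t ^ i)"

definition poly_op :: "real list \<Rightarrow> op \<Rightarrow> op" where
  "poly_op c A = (\<lambda>x n. \<Sum>i<length c. complex_of_real (c ! i) * (A ^^ i) x n)"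

definition op_fun :: "(real \<Rightarrow> real) \<Rightarrow> op \<Rightarrow> op" where
  "op_fun f A = (THE B. bounded_op B \<and> (\<forall>x. x \<notin> l2 \<longrightarrow> B x = (\<lambda>_. 0)) \<and>
      (\<forall>c. opnorm (op_diff (poly_op c A) B)
             \<le> (SUP t\<in>{num_lo A..num_hi A}. \<bar>poly_real c t - f t\<bar>)))"

definition op_powr :: "op \<Rightarrow> real \<Rightarrow> op" where
  "op_powr A a = op_fun (\<lambda>t. t powr a) A"

end

theory Submission
  imports "HOL-Analysis.Analysis" Defs
begin

text \<open>All operators in the statement have rank one with range spanned by \<open>e\<^sub>1\<close> (written \<open>e 0\<close>
  here, the bases being indexed from 0): the series is \<open>h \<mapsto> (\<Sum>\<^sub>n c\<^sub>n \<langle>Xf\<^sub>1,e\<^sub>n\<rangle> \<langle>h,f\<^sub>n\<rangle>) e\<^sub>1\<close>.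
  The Schatten norm of a rank-one operator is its operator norm, which by Cauchy-Schwarz and
  Bessel's inequality is at most \<open>(sup\<^sub>n c\<^sub>n) \<parallel>Xf\<^sub>1\<parallel>\<close>. For \<open>A = \<eta> I + L e\<^sub>1\<otimes>e\<^sub>1\<close> the operator
  \<open>f(\<eta>) I + (f(\<eta>+L) - f(\<eta>)) e\<^sub>1\<otimes>e\<^sub>1\<close> has the defining approximation property of \<open>f(A)\<close>, because
  its distance to a polynomial \<open>p(A)\<close> is the larger error of \<open>p - f\<close> at the spectral points \<open>\<eta>\<close>
  and \<open>\<eta>+L\<close>; by Weierstrass approximation that property determines \<open>f(A)\<close>. Hence \<open>A\<^sup>a\<close> multiplies
  \<open>e\<^sub>1\<close> by \<open>(\<eta>+L)\<^sup>a \<le> L\<^sup>a\<close> for \<open>a \<le> 0\<close>. Finally each weight is bounded by its \<open>\<ell>\<^sup>p\<close>-sum, e.g.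
  \<open>\<lambda>\<^sub>n^(1/2 - 1/2q) \<rho>\<^sub>n^(1/2r) \<le> (\<Sum>\<lambda>)^(1/2 - 1/2q) (\<Sum>\<rho>)^(1/2r)\<close>, and the factor \<open>L\<^sup>a = (\<Sum>\<lambda>)^(1/2q - 1/2)\<close>
  cancels the first power. These crude bounds suffice.\<close>

section \<open>The sequence space \<open>\<ell>\<^sup>2\<close>\<close>

lemma mem_l2_iff: "x \<in> l2 \<longleftrightarrow> summable (\<lambda>n. (cmod (x n))\<^sup>2)"
  by (simp add: l2_def)

lemma power2_norm_add_le: "(cmod (a + b))\<^sup>2 \<le> 2 * (cmod a)\<^sup>2 + 2 * (cmod b)\<^sup>2"
proof -
  have "(cmod (a + b))\<^sup>2 \<le> (cmod a + cmod b)\<^sup>2"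
    by (simp add: norm_triangle_ineq power_mono)
  also have "\<dots> \<le> 2 * (cmod a)\<^sup>2 + 2 * (cmod b)\<^sup>2"
    using sum_squares_bound[of "cmod a" "cmod b"] by (simp add: power2_sum)
  finally show ?thesis .
qed

lemma power2_norm_diff_le: "(cmod (a - b))\<^sup>2 \<le> 2 * (cmod a)\<^sup>2 + 2 * (cmod b)\<^sup>2"
  using power2_norm_add_le[of a "- b"] by simp

lemma summable_norm_mult_l2:
  assumes "x \<in> l2" "y \<in> l2"
  shows "summable (\<lambda>n. cmod (x n) * cmod (y n))"
proof (rule summable_comparison_test)
  have "cmod (x n) * cmod (y n) \<le> ((cmod (x n))\<^sup>2 + (cmod (y n))\<^sup>2) / 2" for n
    using sum_squares_bound[of "cmod (x n)" "cmod (y n)"] by simp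
  then show "\<exists>N. \<forall>n\<ge>N. norm (cmod (x n) * cmod (y n)) \<le> ((cmod (x n))\<^sup>2 + (cmod (y n))\<^sup>2) / 2"
    by auto
  show "summable (\<lambda>n. ((cmod (x n))\<^sup>2 + (cmod (y n))\<^sup>2) / 2)"
    using assms by (intro summable_divide summable_add) (auto simp: mem_l2_iff)
qed

lemma summable_inner_l2:
  assumes "x \<in> l2" "y \<in> l2"
  shows "summable (\<lambda>n. x n * cnj (y n))"
  by (rule summable_norm_cancel) (simp add: norm_mult summable_norm_mult_l2[OF assms])

lemma l2_zero [simp]: "(\<lambda>_. 0) \<in> l2"
  by (simp add: mem_l2_iff)

lemma l2_add:
  assumes "x \<in> l2" "y \<in> l2"
  shows "(\<lambda>n. x n + y n) \<in> l2"
  unfolding mem_l2_iff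
proof (rule summable_comparison_test)
  show "\<exists>N. \<forall>n\<ge>N. norm ((cmod (x n + y n))\<^sup>2) \<le> 2 * (cmod (x n))\<^sup>2 + 2 * (cmod (y n))\<^sup>2"
    using power2_norm_add_le by auto
  show "summable (\<lambda>n. 2 * (cmod (x n))\<^sup>2 + 2 * (cmod (y n))\<^sup>2)"
    using assms by (intro summable_mult summable_add) (auto simp: mem_l2_iff)
qed

lemma l2_scale:
  assumes "x \<in> l2"
  shows "(\<lambda>n. a * x n) \<in> l2"
  using summable_mult[of "\<lambda>n. (cmod (x n))\<^sup>2" "(cmod a)\<^sup>2"] assms
  by (simp add: mem_l2_iff norm_mult power_mult_distrib)

lemma l2_lincomb:
  assumes "x \<in> l2" "y \<in> l2"
  shows "(\<lambda>n. a * x n + b * y n) \<in> l2"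
  using l2_add[OF l2_scale[OF assms(1)] l2_scale[OF assms(2)]] .

lemma l2_diff:
  assumes "x \<in> l2" "y \<in> l2"
  shows "(\<lambda>n. x n - y n) \<in> l2"
  using l2_lincomb[OF assms, of 1 "-1"] by simp

lemma l2_sum:
  assumes "\<And>i. i \<in> I \<Longrightarrow> v i \<in> l2"
  shows "(\<lambda>n. \<Sum>i\<in>I. v i n) \<in> l2"
  using assms
proof (induction I rule: infinite_finite_induct)
  case (insert i F)
  then show ?case
    using l2_add[of "v i" "\<lambda>n. \<Sum>i\<in>F. v i n"] by auto
qed auto

lemma inner_l2_add_left:
  assumes "x \<in> l2" "y \<in> l2" "z \<in> l2"
  shows "inner_l2 (\<lambda>n. x n + y n) z = inner_l2 x z + inner_l2 y z"
  unfolding inner_l2_def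
  using suminf_add[OF summable_inner_l2[OF assms(1,3)] summable_inner_l2[OF assms(2,3)]]
  by (simp add: distrib_right)

lemma inner_l2_scale_left:
  assumes "x \<in> l2" "z \<in> l2"
  shows "inner_l2 (\<lambda>n. a * x n) z = a * inner_l2 x z"
  unfolding inner_l2_def using suminf_mult[OF summable_inner_l2[OF assms], of a]
  by (simp add: mult.assoc)

lemma inner_l2_lincomb_left:
  assumes "x \<in> l2" "y \<in> l2" "z \<in> l2"
  shows "inner_l2 (\<lambda>n. a * x n + b * y n) z = a * inner_l2 x z + b * inner_l2 y z"
  by (simp add: inner_l2_add_left[OF l2_scale[OF assms(1)] l2_scale[OF assms(2)] assms(3)]
      inner_l2_scale_left assms)

lemma inner_l2_commute:
  assumes "x \<in> l2" "y \<in> l2"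
  shows "inner_l2 y x = cnj (inner_l2 x y)"
proof -
  have "(\<lambda>n. cnj (x n * cnj (y n))) sums cnj (inner_l2 x y)"
    unfolding sums_cnj inner_l2_def using summable_inner_l2[OF assms] by (simp add: summable_sums)
  then show ?thesis
    unfolding inner_l2_def by (simp add: sums_iff mult.commute)
qed

lemma inner_l2_lincomb_right:
  assumes "x \<in> l2" "y \<in> l2" "z \<in> l2"
  shows "inner_l2 z (\<lambda>n. a * x n + b * y n) = cnj a * inner_l2 z x + cnj b * inner_l2 z y"
proof -
  have "inner_l2 z (\<lambda>n. a * x n + b * y n) = cnj (inner_l2 (\<lambda>n. a * x n + b * y n) z)"
    by (rule inner_l2_commute) (auto intro: l2_lincomb assms)
  also have "\<dots> = cnj a * cnj (inner_l2 x z) + cnj b * cnj (inner_l2 y z)"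
    by (simp add: inner_l2_lincomb_left assms)
  finally show ?thesis
    using inner_l2_commute[OF assms(3) assms(1)] inner_l2_commute[OF assms(3) assms(2)] by simp
qed

lemma inner_l2_diff_left:
  assumes "x \<in> l2" "y \<in> l2" "z \<in> l2"
  shows "inner_l2 (\<lambda>n. x n - y n) z = inner_l2 x z - inner_l2 y z"
  using inner_l2_lincomb_left[OF assms, of 1 "-1"] by simp

lemma inner_l2_diff_right:
  assumes "x \<in> l2" "y \<in> l2" "z \<in> l2"
  shows "inner_l2 z (\<lambda>n. x n - y n) = inner_l2 z x - inner_l2 z y"
  using inner_l2_lincomb_right[OF assms, of 1 "-1"] by simp

lemma inner_l2_sum_left:
  assumes "\<And>i. i \<in> I \<Longrightarrow> v i \<in> l2" "z \<in> l2"
  shows "inner_l2 (\<lambda>n. \<Sum>i\<in>I. a i * v i n) z = (\<Sum>i\<in>I. a i * inner_l2 (v i) z)"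
  using assms
proof (induction I rule: infinite_finite_induct)
  case (insert j F)
  have "(\<lambda>n. \<Sum>i\<in>F. a i * v i n) \<in> l2"
    using insert.prems by (auto intro!: l2_sum l2_scale)
  then have "inner_l2 (\<lambda>n. a j * v j n + 1 * (\<Sum>i\<in>F. a i * v i n)) z
      = a j * inner_l2 (v j) z + 1 * inner_l2 (\<lambda>n. \<Sum>i\<in>F. a i * v i n) z"
    using insert.prems by (intro inner_l2_lincomb_left) auto
  then show ?case
    using insert by simp
qed (simp_all add: inner_l2_def)

lemma inner_l2_sum_right:
  assumes "\<And>i. i \<in> I \<Longrightarrow> v i \<in> l2" "z \<in> l2"
  shows "inner_l2 z (\<lambda>n. \<Sum>i\<in>I. a i * v i n) = (\<Sum>i\<in>I. cnj (a i) * inner_l2 z (v i))"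
proof -
  have "inner_l2 z (\<lambda>n. \<Sum>i\<in>I. a i * v i n) = cnj (inner_l2 (\<lambda>n. \<Sum>i\<in>I. a i * v i n) z)"
    by (rule inner_l2_commute) (auto intro!: l2_sum l2_scale assms)
  also have "\<dots> = (\<Sum>i\<in>I. cnj (a i) * cnj (inner_l2 (v i) z))"
    using inner_l2_sum_left[OF assms, where a=a] by simp
  also have "\<dots> = (\<Sum>i\<in>I. cnj (a i) * inner_l2 z (v i))"
    using inner_l2_commute[OF assms(2)] assms(1) by simp
  finally show ?thesis .
qed

lemma power2_norm_l2:
  assumes "x \<in> l2"
  shows "(norm_l2 x)\<^sup>2 = (\<Sum>n. (cmod (x n))\<^sup>2)"
proof -
  have "0 \<le> (\<Sum>n. (cmod (x n))\<^sup>2)"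
    by (rule suminf_nonneg) (use assms in \<open>simp_all add: mem_l2_iff\<close>)
  then show ?thesis
    by (simp add: norm_l2_def)
qed

lemma norm_l2_nonneg: "x \<in> l2 \<Longrightarrow> 0 \<le> norm_l2 x"
  by (metis power2_norm_l2 norm_l2_def real_sqrt_ge_zero suminf_nonneg mem_l2_iff zero_le_power2)

lemma norm_l2_zero [simp]: "norm_l2 (\<lambda>_. 0) = 0"
  by (simp add: norm_l2_def)

lemma inner_l2_self:
  assumes "x \<in> l2"
  shows "inner_l2 x x = complex_of_real ((norm_l2 x)\<^sup>2)"
proof -
  have "(\<lambda>n. x n * cnj (x n)) = (\<lambda>n. complex_of_real ((cmod (x n))\<^sup>2))"
    by (metis complex_norm_square)
  then show ?thesis
    using assms by (simp add: inner_l2_def power2_norm_l2 mem_l2_iff suminf_of_real)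
qed

lemma norm_l2_scale:
  assumes "x \<in> l2"
  shows "norm_l2 (\<lambda>n. a * x n) = cmod a * norm_l2 x"
proof -
  have "(\<Sum>n. (cmod (a * x n))\<^sup>2) = (cmod a)\<^sup>2 * (\<Sum>n. (cmod (x n))\<^sup>2)"
    using assms by (simp add: norm_mult power_mult_distrib suminf_mult mem_l2_iff)
  then show ?thesis
    unfolding norm_l2_def by (simp add: real_sqrt_mult)
qed

lemma power2_norm_l2_diff_le:
  assumes "x \<in> l2" "y \<in> l2"
  shows "(norm_l2 (\<lambda>n. x n - y n))\<^sup>2 \<le> 2 * (norm_l2 x)\<^sup>2 + 2 * (norm_l2 y)\<^sup>2"
proof -
  have sx: "summable (\<lambda>n. (cmod (x n))\<^sup>2)" and sy: "summable (\<lambda>n. (cmod (y n))\<^sup>2)"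
    using assms by (auto simp: mem_l2_iff)
  have "(\<Sum>n. (cmod (x n - y n))\<^sup>2) \<le> (\<Sum>n. 2 * (cmod (x n))\<^sup>2 + 2 * (cmod (y n))\<^sup>2)"
    using l2_diff[OF assms] power2_norm_diff_le
    by (intro suminf_le summable_add summable_mult sx sy) (auto simp: mem_l2_iff)
  also have "\<dots> = 2 * (\<Sum>n. (cmod (x n))\<^sup>2) + 2 * (\<Sum>n. (cmod (y n))\<^sup>2)"
    using suminf_add[OF summable_mult[OF sx] summable_mult[OF sy]] suminf_mult[OF sx] suminf_mult[OF sy]
    by metis
  finally show ?thesis
    using l2_diff[OF assms] assms by (simp add: power2_norm_l2)
qed

lemma l2_eqI_norm_diff_le:
  assumes "x \<in> l2" "y \<in> l2" "\<And>\<epsilon>. 0 < \<epsilon> \<Longrightarrow> norm_l2 (\<lambda>n. x n - y n) \<le> \<epsilon>"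
  shows "x = y"
proof -
  have "norm_l2 (\<lambda>n. x n - y n) = 0"
  proof (rule order.antisym)
    show "norm_l2 (\<lambda>n. x n - y n) \<le> 0"
      by (rule field_le_epsilon) (simp add: assms(3))
  qed (rule norm_l2_nonneg[OF l2_diff[OF assms(1,2)]])
  then have "(\<Sum>n. (cmod (x n - y n))\<^sup>2) = 0"
    using power2_norm_l2[OF l2_diff[OF assms(1,2)]] by simp
  moreover have "summable (\<lambda>n. (cmod (x n - y n))\<^sup>2)"
    using l2_diff[OF assms(1,2)] by (simp add: mem_l2_iff)
  ultimately have "\<forall>n. (cmod (x n - y n))\<^sup>2 = 0"
    using suminf_eq_zero_iff[of "\<lambda>n. (cmod (x n - y n))\<^sup>2"] by simp
  then show ?thesis
    by auto
qed

lemma norm_l2_eq_1I: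
  assumes "x \<in> l2" "inner_l2 x x = 1"
  shows "norm_l2 x = 1"
proof -
  have "(norm_l2 x)\<^sup>2 = 1"
    using inner_l2_self[OF assms(1)] assms(2) by (metis of_real_eq_1_iff)
  then show ?thesis
    using norm_l2_nonneg[OF assms(1)] by (simp add: power2_eq_1_iff)
qed

section \<open>Orthonormal sequences and Bessel's inequality\<close>

definition orthonormal_seq :: "(nat \<Rightarrow> vec) \<Rightarrow> bool" where
  "orthonormal_seq u \<longleftrightarrow>
     (\<forall>n. u n \<in> l2) \<and> (\<forall>m n. inner_l2 (u m) (u n) = (if m = n then 1 else 0))"

lemma orthonormal_basis_imp_seq: "orthonormal_basis u \<Longrightarrow> orthonormal_seq u"
  by (simp add: orthonormal_basis_def orthonormal_seq_def)

lemma inner_l2_orthonormal_sum: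
  assumes "orthonormal_seq u" "j < N"
  shows "inner_l2 (u j) (\<lambda>n. \<Sum>i<N. c i * u i n) = cnj (c j)"
proof -
  have "inner_l2 (u j) (\<lambda>n. \<Sum>i<N. c i * u i n) = (\<Sum>i<N. cnj (c i) * inner_l2 (u j) (u i))"
    using assms(1) by (intro inner_l2_sum_right) (simp_all add: orthonormal_seq_def)
  also have "\<dots> = (\<Sum>i<N. if i = j then cnj (c i) else 0)"
    using assms(1) by (intro sum.cong) (auto simp: orthonormal_seq_def)
  finally show ?thesis
    using assms(2) by simp
qed

lemma bessel_inequality_finite:
  assumes "orthonormal_seq u" "h \<in> l2"
  shows "(\<Sum>i<N. (cmod (inner_l2 h (u i)))\<^sup>2) \<le> (norm_l2 h)\<^sup>2"
proof -
  have u_l2: "\<And>i. u i \<in> l2"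
    using assms(1) by (simp add: orthonormal_seq_def)
  define c where "c i = inner_l2 h (u i)" for i
  define p where "p = (\<lambda>n. \<Sum>i<N. c i * u i n)"
  define w where "w = (\<lambda>n. h n - p n)"
  have p_l2: "p \<in> l2"
    unfolding p_def by (auto intro!: l2_sum l2_scale u_l2)
  have w_l2: "w \<in> l2"
    unfolding w_def by (rule l2_diff[OF assms(2) p_l2])
  have "inner_l2 (u j) w = 0" if "j < N" for j
    using that inner_l2_orthonormal_sum[OF assms(1) that, of c] unfolding w_def p_def[symmetric]
    using that unfolding w_def
    by (simp add: inner_l2_diff_right[OF assms(2) p_l2 u_l2] c_def inner_l2_commute[OF u_l2 assms(2)])
  then have pw: "inner_l2 p w = 0"
    unfolding p_def by (simp add: inner_l2_sum_left u_l2 w_l2)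
  have hp: "inner_l2 h p = (\<Sum>i<N. complex_of_real ((cmod (c i))\<^sup>2))"
  proof -
    have "inner_l2 h p = (\<Sum>i<N. cnj (c i) * inner_l2 h (u i))"
      unfolding p_def by (rule inner_l2_sum_right) (auto simp: u_l2 assms)
    then show ?thesis
      by (simp add: c_def complex_norm_square[symmetric] mult.commute del: of_real_power)
  qed
  have "inner_l2 w w = inner_l2 h w - inner_l2 p w"
    using inner_l2_diff_left[OF assms(2) p_l2 w_l2] by (simp add: w_def)
  also have "\<dots> = inner_l2 h h - inner_l2 h p"
    using pw inner_l2_diff_right[OF assms(2) p_l2 assms(2)] by (simp add: w_def)
  finally have "Re (inner_l2 w w) = (norm_l2 h)\<^sup>2 - (\<Sum>i<N. (cmod (c i))\<^sup>2)"
    using hp by (simp add: inner_l2_self assms)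
  moreover have "Re (inner_l2 w w) = (norm_l2 w)\<^sup>2"
    by (simp add: inner_l2_self w_l2)
  ultimately show ?thesis
    by (simp add: c_def) (metis diff_ge_0_iff_ge zero_le_power2)
qed

lemma
  assumes "orthonormal_seq u" "h \<in> l2"
  shows summable_bessel: "summable (\<lambda>i. (cmod (inner_l2 h (u i)))\<^sup>2)"
    and bessel_inequality: "(\<Sum>i. (cmod (inner_l2 h (u i)))\<^sup>2) \<le> (norm_l2 h)\<^sup>2"
proof -
  show s: "summable (\<lambda>i. (cmod (inner_l2 h (u i)))\<^sup>2)"
    by (rule summableI_nonneg_bounded) (use bessel_inequality_finite[OF assms] in auto)
  show "(\<Sum>i. (cmod (inner_l2 h (u i)))\<^sup>2) \<le> (norm_l2 h)\<^sup>2"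
    by (rule suminf_le_const[OF s]) (use bessel_inequality_finite[OF assms] in auto)
qed

lemma Cauchy_Schwarz_suminf:
  fixes a b :: "nat \<Rightarrow> real"
  assumes "summable (\<lambda>n. (a n)\<^sup>2)" "summable (\<lambda>n. (b n)\<^sup>2)"
  shows "summable (\<lambda>n. \<bar>a n * b n\<bar>)"
    and "(\<Sum>n. \<bar>a n * b n\<bar>) \<le> sqrt (\<Sum>n. (a n)\<^sup>2) * sqrt (\<Sum>n. (b n)\<^sup>2)"
proof -
  have pointwise: "\<bar>a n * b n\<bar> \<le> ((a n)\<^sup>2 + (b n)\<^sup>2) / 2" for n
  proof -
    have "0 \<le> (\<bar>a n\<bar> - \<bar>b n\<bar>)\<^sup>2"
      by simp
    then show ?thesis
      by (simp add: power2_eq_square algebra_simps abs_mult)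
  qed
  show s: "summable (\<lambda>n. \<bar>a n * b n\<bar>)"
    by (rule summable_comparison_test[where g="\<lambda>n. ((a n)\<^sup>2 + (b n)\<^sup>2) / 2"])
      (use pointwise assms in \<open>auto intro!: summable_divide summable_add\<close>)
  show "(\<Sum>n. \<bar>a n * b n\<bar>) \<le> sqrt (\<Sum>n. (a n)\<^sup>2) * sqrt (\<Sum>n. (b n)\<^sup>2)"
  proof (rule suminf_le_const[OF s])
    fix N
    have "(\<Sum>n<N. \<bar>a n\<bar> * \<bar>b n\<bar>)\<^sup>2 \<le> (\<Sum>n<N. \<bar>a n\<bar>\<^sup>2) * (\<Sum>n<N. \<bar>b n\<bar>\<^sup>2)"
      by (rule Cauchy_Schwarz_ineq_sum)
    also have "\<dots> \<le> (\<Sum>n. (a n)\<^sup>2) * (\<Sum>n. (b n)\<^sup>2)"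
      by (rule mult_mono) (auto intro!: sum_le_suminf assms sum_nonneg suminf_nonneg)
    finally have "(\<Sum>n<N. \<bar>a n * b n\<bar>) \<le> sqrt ((\<Sum>n. (a n)\<^sup>2) * (\<Sum>n. (b n)\<^sup>2))"
      by (simp add: abs_mult real_le_rsqrt)
    then show "(\<Sum>n<N. \<bar>a n * b n\<bar>) \<le> sqrt (\<Sum>n. (a n)\<^sup>2) * sqrt (\<Sum>n. (b n)\<^sup>2)"
      by (simp add: real_sqrt_mult)
  qed
qed

definition coeff_functional :: "(nat \<Rightarrow> vec) \<Rightarrow> (nat \<Rightarrow> complex) \<Rightarrow> vec \<Rightarrow> complex" where
  "coeff_functional f D h = (\<Sum>n. D n * inner_l2 h (f n))"

text \<open>\<open>weighted_tensor_sum f D u\<close> is the operator \<open>\<Sum>\<^sub>n D\<^sub>n f\<^sub>n \<otimes> u\<close>.\<close>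

definition weighted_tensor_sum :: "(nat \<Rightarrow> vec) \<Rightarrow> (nat \<Rightarrow> complex) \<Rightarrow> vec \<Rightarrow> op" where
  "weighted_tensor_sum f D u = (\<lambda>h m. coeff_functional f D h * u m)"

lemma
  assumes "orthonormal_seq f" "summable (\<lambda>n. (cmod (D n))\<^sup>2)" "h \<in> l2"
  shows summable_coeff_functional: "summable (\<lambda>n. D n * inner_l2 h (f n))"
    and norm_coeff_functional_le:
      "cmod (coeff_functional f D h) \<le> sqrt (\<Sum>n. (cmod (D n))\<^sup>2) * norm_l2 h"
proof -
  note bessel = summable_bessel[OF assms(1,3)] bessel_inequality[OF assms(1,3)]
  note CS = Cauchy_Schwarz_suminf[OF assms(2) bessel(1)]
  show "summable (\<lambda>n. D n * inner_l2 h (f n))"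
    by (rule summable_norm_cancel) (use CS(1) in \<open>simp add: norm_mult abs_mult\<close>)
  have "cmod (coeff_functional f D h) \<le> (\<Sum>n. cmod (D n * inner_l2 h (f n)))"
    unfolding coeff_functional_def
    by (rule summable_norm) (use CS(1) in \<open>simp add: norm_mult abs_mult\<close>)
  also have "\<dots> \<le> sqrt (\<Sum>n. (cmod (D n))\<^sup>2) * sqrt (\<Sum>n. (cmod (inner_l2 h (f n)))\<^sup>2)"
    using CS(2) by (simp add: norm_mult abs_mult)
  also have "\<dots> \<le> sqrt (\<Sum>n. (cmod (D n))\<^sup>2) * norm_l2 h"
    using norm_l2_nonneg[OF assms(3)] real_sqrt_le_mono[OF bessel(2)] suminf_nonneg[OF assms(2)]
    by (intro mult_left_mono) auto
  finally show "cmod (coeff_functional f D h) \<le> sqrt (\<Sum>n. (cmod (D n))\<^sup>2) * norm_l2 h" .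
qed

lemma coeff_functional_lincomb:
  assumes "orthonormal_seq f" "summable (\<lambda>n. (cmod (D n))\<^sup>2)" "x \<in> l2" "y \<in> l2"
  shows "coeff_functional f D (\<lambda>n. a * x n + b * y n)
           = a * coeff_functional f D x + b * coeff_functional f D y"
proof -
  have "\<And>n. f n \<in> l2"
    using assms(1) by (simp add: orthonormal_seq_def)
  then have "coeff_functional f D (\<lambda>n. a * x n + b * y n)
      = (\<Sum>n. a * (D n * inner_l2 x (f n)) + b * (D n * inner_l2 y (f n)))"
    unfolding coeff_functional_def by (simp add: inner_l2_lincomb_left assms algebra_simps)
  also have "\<dots> = a * coeff_functional f D x + b * coeff_functional f D y"
    unfolding coeff_functional_def
    by (simp add: suminf_add[symmetric] suminf_mult summable_mult summable_coeff_functional assms)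
  finally show ?thesis .
qed

lemma coeff_functional_scale:
  assumes "orthonormal_seq f" "summable (\<lambda>n. (cmod (D n))\<^sup>2)" "h \<in> l2"
  shows "coeff_functional f (\<lambda>n. k * D n) h = k * coeff_functional f D h"
  unfolding coeff_functional_def
  using suminf_mult[OF summable_coeff_functional[OF assms], of k] by (simp add: mult.assoc)

lemma
  assumes "summable (\<lambda>n. (cmod (D n))\<^sup>2)" "0 \<le> k"
  shows summable_scaled_coeffs: "summable (\<lambda>n. (cmod (of_real k * D n))\<^sup>2)"
    and sqrt_suminf_scaled_coeffs:
      "sqrt (\<Sum>n. (cmod (of_real k * D n))\<^sup>2) = k * sqrt (\<Sum>n. (cmod (D n))\<^sup>2)"
  using summable_mult[OF assms(1), of "k\<^sup>2"] suminf_mult[OF assms(1), of "k\<^sup>2"] assms(2)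
  by (simp_all add: norm_mult power_mult_distrib real_sqrt_mult)

lemma coeff_functional_single:
  "coeff_functional f (\<lambda>k. if k = n then d else 0) h = d * inner_l2 h (f n)"
  unfolding coeff_functional_def by (subst suminf_finite[of "{n}"]) auto

section \<open>Operator norm and rank-one operators\<close>

definition unit_ball_bounded :: "op \<Rightarrow> real \<Rightarrow> bool" where
  "unit_ball_bounded T K \<longleftrightarrow>
     (\<forall>x\<in>l2. T x \<in> l2) \<and> (\<forall>x\<in>l2. norm_l2 x \<le> 1 \<longrightarrow> norm_l2 (T x) \<le> K)"

lemma opnorm_le:
  assumes "\<And>x. x \<in> l2 \<Longrightarrow> norm_l2 x \<le> 1 \<Longrightarrow> norm_l2 (T x) \<le> K"
  shows "opnorm T \<le> K"
  unfolding opnorm_def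
proof (rule cSup_least)
  show "{norm_l2 (T x) |x. x \<in> l2 \<and> norm_l2 x \<le> 1} \<noteq> {}"
    using l2_zero norm_l2_zero by (metis (mono_tags, lifting) empty_Collect_eq zero_le_one)
qed (use assms in auto)

lemma norm_l2_le_opnorm:
  assumes "unit_ball_bounded T K" "x \<in> l2" "norm_l2 x \<le> 1"
  shows "norm_l2 (T x) \<le> opnorm T"
  unfolding opnorm_def
  by (rule cSup_upper) (use assms in \<open>auto simp: unit_ball_bounded_def bdd_above_def\<close>)

lemma opnorm_nonneg:
  assumes "unit_ball_bounded T K"
  shows "0 \<le> opnorm T"
proof -
  have "0 \<le> norm_l2 (T (\<lambda>_. 0))"
    using assms norm_l2_nonneg by (simp add: unit_ball_bounded_def)
  also have "\<dots> \<le> opnorm T"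
    by (rule norm_l2_le_opnorm[OF assms]) auto
  finally show ?thesis .
qed

lemma bounded_op_imp_unit_ball_bounded:
  assumes "bounded_op T"
  obtains K where "unit_ball_bounded T K"
proof -
  obtain K where K: "\<And>x. x \<in> l2 \<Longrightarrow> norm_l2 (T x) \<le> K * norm_l2 x"
    and T_l2: "\<And>x. x \<in> l2 \<Longrightarrow> T x \<in> l2"
    using assms unfolding bounded_op_def by blast
  have "norm_l2 (T x) \<le> max K 0" if "x \<in> l2" "norm_l2 x \<le> 1" for x
  proof -
    have "K * norm_l2 x \<le> max K 0 * norm_l2 x"
      by (rule mult_right_mono) (auto simp: norm_l2_nonneg that)
    also have "\<dots> \<le> max K 0"
      using that by (simp add: mult_left_le norm_l2_nonneg)
    finally show ?thesis
      using K[OF that(1)] by linarith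
  qed
  then show thesis
    using T_l2 by (intro that[of "max K 0"]) (auto simp: unit_ball_bounded_def)
qed

lemma unit_ball_bounded_diff:
  assumes "unit_ball_bounded T K1" "unit_ball_bounded F K2"
  shows "unit_ball_bounded (op_diff T F) (sqrt (2 * K1\<^sup>2 + 2 * K2\<^sup>2))"
  unfolding unit_ball_bounded_def
proof (intro conjI ballI impI)
  fix x assume "x \<in> l2"
  then show "op_diff T F x \<in> l2"
    using assms unfolding op_diff_def unit_ball_bounded_def by (auto intro: l2_diff)
next
  fix x assume x: "x \<in> l2" "norm_l2 x \<le> 1"
  have l2: "T x \<in> l2" "F x \<in> l2" and bound: "norm_l2 (T x) \<le> K1" "norm_l2 (F x) \<le> K2"
    using assms x unfolding unit_ball_bounded_def by auto
  have "(norm_l2 (op_diff T F x))\<^sup>2 \<le> 2 * (norm_l2 (T x))\<^sup>2 + 2 * (norm_l2 (F x))\<^sup>2"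
    unfolding op_diff_def by (rule power2_norm_l2_diff_le[OF l2])
  also have "\<dots> \<le> 2 * K1\<^sup>2 + 2 * K2\<^sup>2"
    using bound norm_l2_nonneg[OF l2(1)] norm_l2_nonneg[OF l2(2)]
    by (intro add_mono mult_left_mono power_mono) auto
  finally show "norm_l2 (op_diff T F x) \<le> sqrt (2 * K1\<^sup>2 + 2 * K2\<^sup>2)"
    by (simp add: real_le_rsqrt)
qed

lemma opnorm_cong:
  assumes "\<And>x. x \<in> l2 \<Longrightarrow> T x = T' x"
  shows "opnorm T = opnorm T'"
  unfolding opnorm_def using assms by metis

lemma opnorm_eq_0:
  assumes "\<And>x. x \<in> l2 \<Longrightarrow> T x = (\<lambda>_. 0)"
  shows "opnorm T = 0"
proof -
  have "opnorm T = opnorm (\<lambda>x n. 0)"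
    by (rule opnorm_cong) (use assms in auto)
  also have "\<dots> = 0"
    by (intro order.antisym opnorm_le opnorm_nonneg[of _ 0]) (auto simp: unit_ball_bounded_def)
  finally show ?thesis .
qed

lemma schatten_norm_nonneg: "0 \<le> schatten_norm s T"
  by (simp add: schatten_norm_def)

lemma sing_val_0: "sing_val T 0 = opnorm T"
proof -
  have zero: "bounded_op (\<lambda>x n. 0)" "op_rank_le (\<lambda>x n. 0) 0"
    unfolding bounded_op_def op_rank_le_def by (auto intro!: exI[of _ 0])
  have eq: "opnorm (op_diff T F) = opnorm T" if "op_rank_le F 0" for F
    using that by (intro opnorm_cong) (simp add: op_rank_le_def op_diff_def)
  have "{opnorm (op_diff T F) | F. bounded_op F \<and> op_rank_le F 0} = {opnorm T}"
  proof (intro equalityI subsetI)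
    fix y assume "y \<in> {opnorm (op_diff T F) | F. bounded_op F \<and> op_rank_le F 0}"
    then show "y \<in> {opnorm T}"
      using eq by blast
  next
    fix y assume "y \<in> {opnorm T}"
    then have "y = opnorm (op_diff T (\<lambda>x n. 0)) \<and> bounded_op (\<lambda>x n. 0) \<and> op_rank_le (\<lambda>x n. 0) 0"
      using zero eq[OF zero(2)] by simp
    then show "y \<in> {opnorm (op_diff T F) | F. bounded_op F \<and> op_rank_le F 0}"
      by (intro CollectI exI)
  qed
  then show ?thesis
    by (simp add: sing_val_def)
qed

lemma sing_val_eq_0_if_rank_le:
  assumes "bounded_op T" "op_rank_le T k"
  shows "sing_val T k = 0"
  unfolding sing_val_def
proof (rule cInf_eq_minimum)
  show "0 \<in> {opnorm (op_diff T F) | F. bounded_op F \<and> op_rank_le F k}"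
    using assms opnorm_eq_0[of "op_diff T T"] by (force simp: op_diff_def)
next
  obtain K where K: "unit_ball_bounded T K"
    using bounded_op_imp_unit_ball_bounded[OF assms(1)] .
  fix y assume "y \<in> {opnorm (op_diff T F) | F. bounded_op F \<and> op_rank_le F k}"
  then obtain F where F: "y = opnorm (op_diff T F)" "bounded_op F"
    by blast
  obtain K' where "unit_ball_bounded F K'"
    using bounded_op_imp_unit_ball_bounded[OF F(2)] .
  then show "0 \<le> y"
    using F(1) opnorm_nonneg[OF unit_ball_bounded_diff[OF K]] by blast
qed

lemma op_rank_le_rank_one:
  assumes "u \<in> l2" "\<And>x. x \<in> l2 \<Longrightarrow> T x = (\<lambda>m. c x * u m)"
  shows "op_rank_le T (Suc k)"
  unfolding op_rank_le_def
proof (intro exI conjI allI impI ballI)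
  fix x assume "x \<in> l2"
  then show "T x = (\<lambda>n. \<Sum>i<Suc k. (if i = 0 then c x else 0) * u n)"
    using assms(2) by (simp add: sum.lessThan_Suc_shift del: sum.lessThan_Suc)
qed (use assms(1) in auto)

lemma
  assumes "0 < s" "u \<in> l2" "bounded_op T" "\<And>x. x \<in> l2 \<Longrightarrow> T x = (\<lambda>m. c x * u m)"
  shows schatten_class_rank_one: "schatten_class s T"
    and schatten_norm_rank_one: "schatten_norm s T = opnorm T"
proof -
  obtain K where "unit_ball_bounded T K"
    using bounded_op_imp_unit_ball_bounded[OF assms(3)] .
  then have nonneg: "0 \<le> opnorm T"
    by (rule opnorm_nonneg)
  have "(\<lambda>k. sing_val T k powr s) = (\<lambda>k. if k = 0 then opnorm T powr s else 0)"
  proof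
    fix k show "sing_val T k powr s = (if k = 0 then opnorm T powr s else 0)"
      using sing_val_0 sing_val_eq_0_if_rank_le[OF assms(3) op_rank_le_rank_one[OF assms(2,4)]]
      by (cases k) auto
  qed
  then have sums: "(\<lambda>k. sing_val T k powr s) sums (opnorm T powr s)"
    using sums_single[of 0 "\<lambda>_. opnorm T powr s"] by simp
  show "schatten_class s T"
    unfolding schatten_class_def using assms(3) sums_summable[OF sums] by blast
  show "schatten_norm s T = opnorm T"
    unfolding schatten_norm_def using sums nonneg assms(1) by (simp add: sums_iff powr_powr)
qed

lemma
  assumes f: "orthonormal_seq f" and D: "summable (\<lambda>n. (cmod (D n))\<^sup>2)" and "0 < s"
    and u: "u \<in> l2" "norm_l2 u = 1"
    and T: "\<And>h. h \<in> l2 \<Longrightarrow> T h = weighted_tensor_sum f D u h"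
  shows schatten_class_weighted_tensor_sum: "schatten_class s T"
    and schatten_norm_weighted_tensor_sum_le: "schatten_norm s T \<le> sqrt (\<Sum>n. (cmod (D n))\<^sup>2)"
proof -
  let ?K = "sqrt (\<Sum>n. (cmod (D n))\<^sup>2)"
  have T_eq: "T h = (\<lambda>m. coeff_functional f D h * u m)" if "h \<in> l2" for h
    using T[OF that] by (simp add: weighted_tensor_sum_def)
  have norm_T: "norm_l2 (T h) \<le> ?K * norm_l2 h" if "h \<in> l2" for h
    using T_eq[OF that] norm_l2_scale[OF u(1)] u(2) norm_coeff_functional_le[OF f D that] by simp
  have "bounded_op T"
    unfolding bounded_op_def
  proof (intro conjI ballI allI exI)
    fix x assume "x \<in> l2"
    then show "T x \<in> l2" "norm_l2 (T x) \<le> ?K * norm_l2 x"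
      using T_eq l2_scale[OF u(1)] norm_T by simp_all
  next
    fix x y a b assume "x \<in> l2" "y \<in> l2"
    then show "T (\<lambda>n. a * x n + b * y n) = (\<lambda>n. a * T x n + b * T y n)"
      using T_eq[OF l2_lincomb] T_eq coeff_functional_lincomb[OF f D] by (simp add: algebra_simps)
  qed
  note rank_one = schatten_class_rank_one[OF \<open>0 < s\<close> u(1) this T_eq]
    schatten_norm_rank_one[OF \<open>0 < s\<close> u(1) this T_eq]
  show "schatten_class s T"
    by (rule rank_one(1))
  have "opnorm T \<le> ?K"
  proof (rule opnorm_le)
    fix x assume "x \<in> l2" "norm_l2 x \<le> 1"
    moreover have "0 \<le> ?K"
      using suminf_nonneg[OF D] by simp
    ultimately show "norm_l2 (T x) \<le> ?K"
      using norm_T by (meson mult_left_le order.trans)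
  qed
  then show "schatten_norm s T \<le> ?K"
    using rank_one(2) by simp
qed

lemma
  fixes g :: "nat \<Rightarrow> 'a::real_normed_vector"
  assumes "summable g"
  shows suminf_drop_initial: "(\<Sum>k. if k < N then 0 else g k) = suminf g - (\<Sum>k<N. g k)"
    and suminf_drop_initial_tendsto_0: "(\<lambda>N. \<Sum>k. if k < N then 0 else g k) \<longlonglongrightarrow> 0"
proof -
  have "(\<lambda>k. if k < N then 0 else g k) = (\<lambda>k. g k - (if k < N then g k else 0))" for N
    by auto
  moreover have "(\<Sum>k. if k < N then g k else 0) = (\<Sum>k<N. g k)" for N
    by (subst suminf_finite[of "{..<N}"]) auto
  ultimately show drop: "(\<Sum>k. if k < N then 0 else g k) = suminf g - (\<Sum>k<N. g k)" for N
    using suminf_diff[OF assms summable_finite[of "{..<N}" "\<lambda>k. if k < N then g k else 0"]] by simp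
  show "(\<lambda>N. \<Sum>k. if k < N then 0 else g k) \<longlonglongrightarrow> 0"
    unfolding drop using tendsto_diff[OF tendsto_const summable_LIMSEQ[OF assms], of "suminf g"] by simp
qed

lemma schatten_sums_weighted_tensor_sum:
  assumes f: "orthonormal_seq f" and D: "summable (\<lambda>n. (cmod (D n))\<^sup>2)" and s: "0 < s"
    and u: "u \<in> l2" "norm_l2 u = 1"
  shows "schatten_sums s (\<lambda>n h m. D n * tensor (f n) u h m) (weighted_tensor_sum f D u)"
proof -
  let ?A = "\<lambda>n h m. D n * tensor (f n) u h m"
  note schatten = schatten_class_weighted_tensor_sum[OF f _ s u]
    schatten_norm_weighted_tensor_sum_le[OF f _ s u]
  have summands: "schatten_class s (?A n)" for n
  proof (rule schatten(1))
    show "summable (\<lambda>k. (cmod (if k = n then D n else 0))\<^sup>2)"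
      by (rule summable_finite[of "{n}"]) auto
  qed (simp add: weighted_tensor_sum_def coeff_functional_single tensor_def mult.assoc)
  have total: "schatten_class s (weighted_tensor_sum f D u)"
    by (rule schatten(1)[OF D]) simp
  define tail where "tail N k = (if k < N then 0 else D k)" for N k
  have summable_tail: "summable (\<lambda>k. (cmod (tail N k))\<^sup>2)" for N
    by (rule summable_comparison_test[OF _ D]) (auto simp: tail_def)
  have remainder: "op_diff (weighted_tensor_sum f D u) (\<lambda>h n. \<Sum>i<N. ?A i h n) h
      = weighted_tensor_sum f (tail N) u h" if h: "h \<in> l2" for N h
  proof -
    have "(\<lambda>k. tail N k * inner_l2 h (f k)) = (\<lambda>k. if k < N then 0 else D k * inner_l2 h (f k))"
      by (auto simp: tail_def)
    then have "coeff_functional f (tail N) h = coeff_functional f D h - (\<Sum>k<N. D k * inner_l2 h (f k))"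
      unfolding coeff_functional_def by (simp add: suminf_drop_initial summable_coeff_functional[OF f D h])
    then show ?thesis
      by (simp add: op_diff_def weighted_tensor_sum_def tensor_def sum_distrib_right
          left_diff_distrib mult.assoc)
  qed
  have "(\<lambda>k. (cmod (tail N k))\<^sup>2) = (\<lambda>k. if k < N then 0 else (cmod (D k))\<^sup>2)" for N
    by (auto simp: tail_def)
  then have "(\<lambda>N. \<Sum>k. (cmod (tail N k))\<^sup>2) \<longlonglongrightarrow> 0"
    using suminf_drop_initial_tendsto_0[OF D] by simp
  then have tail_lim: "(\<lambda>N. sqrt (\<Sum>k. (cmod (tail N k))\<^sup>2)) \<longlonglongrightarrow> 0"
    using tendsto_real_sqrt by force
  have "(\<lambda>N. schatten_norm s (op_diff (weighted_tensor_sum f D u) (\<lambda>h n. \<Sum>i<N. ?A i h n))) \<longlonglongrightarrow> 0"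
    by (rule tendsto_sandwich[OF _ _ tendsto_const tail_lim])
      (simp_all add: schatten_norm_nonneg schatten(2)[OF summable_tail remainder])
  then show ?thesis
    unfolding schatten_sums_def using total summands by blast
qed

section \<open>Uniqueness in the continuous functional calculus\<close>

definition op_fun_spec :: "(real \<Rightarrow> real) \<Rightarrow> op \<Rightarrow> op \<Rightarrow> bool" where
  "op_fun_spec f A B \<longleftrightarrow> bounded_op B \<and> (\<forall>x. x \<notin> l2 \<longrightarrow> B x = (\<lambda>_. 0)) \<and>
      (\<forall>c. opnorm (op_diff (poly_op c A) B)
             \<le> (SUP t\<in>{num_lo A..num_hi A}. \<bar>poly_real c t - f t\<bar>))"

lemma op_fun_eqI:
  assumes "op_fun_spec f A B" "\<And>B'. op_fun_spec f A B' \<Longrightarrow> B' = B"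
  shows "op_fun f A = B"
proof -
  have "op_fun f A = (THE B. op_fun_spec f A B)"
    by (simp add: op_fun_def op_fun_spec_def)
  then show ?thesis
    using the_equality[of "op_fun_spec f A", OF assms] by simp
qed

lemma exists_poly_real_approx:
  assumes "continuous_on {a..b} f" "0 < \<epsilon>"
  obtains cs where "\<And>t. t \<in> {a..b} \<Longrightarrow> \<bar>poly_real cs t - f t\<bar> < \<epsilon>"
proof -
  obtain g where g: "real_polynomial_function g" "\<And>t. t \<in> {a..b} \<Longrightarrow> \<bar>f t - g t\<bar> < \<epsilon>"
    using Stone_Weierstrass_real_polynomial_function[OF compact_Icc assms] by blast
  obtain c n where "g = (\<lambda>x. \<Sum>i\<le>n. c i * x ^ i)"
    using real_polynomial_function_imp_sum[OF g(1)] by blast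
  then have "poly_real (map c [0..<Suc n]) t = g t" for t
    unfolding poly_real_def by (simp add: lessThan_Suc_atMost[symmetric] del: upt_Suc)
  then show thesis
    using g(2) by (intro that[of "map c [0..<Suc n]"]) (simp add: abs_minus_commute)
qed

lemma bounded_op_scale:
  assumes "bounded_op B" "x \<in> l2"
  shows "B (\<lambda>n. r * x n) = (\<lambda>n. r * B x n)"
proof -
  have "B (\<lambda>n. r * x n + 0 * x n) = (\<lambda>n. r * B x n + 0 * B x n)"
    using assms unfolding bounded_op_def by blast
  then show ?thesis
    by simp
qed

lemma bounded_op_eqI_unit_ball:
  assumes B1: "bounded_op B1" and B2: "bounded_op B2"
    and outside: "\<And>x. x \<notin> l2 \<Longrightarrow> B1 x = B2 x"
    and ball: "\<And>y. y \<in> l2 \<Longrightarrow> norm_l2 y \<le> 1 \<Longrightarrow> B1 y = B2 y"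
  shows "B1 = B2"
proof
  fix x
  show "B1 x = B2 x"
  proof (cases "x \<in> l2")
    case True
    define r where "r = 1 / (norm_l2 x + 1)"
    have r: "0 < r" "r * norm_l2 x \<le> 1"
      using norm_l2_nonneg[OF True] by (simp_all add: r_def field_simps)
    have "B1 (\<lambda>n. complex_of_real r * x n) = B2 (\<lambda>n. complex_of_real r * x n)"
      using r norm_l2_scale[OF True] by (intro ball l2_scale True) simp
    then have "(\<lambda>n. complex_of_real r * B1 x n) = (\<lambda>n. complex_of_real r * B2 x n)"
      by (simp add: bounded_op_scale[OF B1 True] bounded_op_scale[OF B2 True])
    then show ?thesis
      using r(1) by (metis (no_types, lifting) ext mult_cancel_left of_real_eq_0_iff order_less_irrefl)
  qed (rule outside)
qed

lemma norm_op_fun_spec_diff_le: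
  assumes "op_fun_spec f A B" "unit_ball_bounded (poly_op c A) K" "y \<in> l2" "norm_l2 y \<le> 1"
  shows "norm_l2 (op_diff (poly_op c A) B y) \<le> (SUP t\<in>{num_lo A..num_hi A}. \<bar>poly_real c t - f t\<bar>)"
proof -
  obtain K' where "unit_ball_bounded B K'"
    using bounded_op_imp_unit_ball_bounded assms(1) op_fun_spec_def by blast
  then have "norm_l2 (op_diff (poly_op c A) B y) \<le> opnorm (op_diff (poly_op c A) B)"
    using norm_l2_le_opnorm[OF unit_ball_bounded_diff[OF assms(2)] assms(3,4)] by blast
  also have "\<dots> \<le> (SUP t\<in>{num_lo A..num_hi A}. \<bar>poly_real c t - f t\<bar>)"
    using assms(1) by (simp add: op_fun_spec_def)
  finally show ?thesis .
qed

lemma norm_diff_op_fun_spec_le: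
  assumes B1: "op_fun_spec f A B1" and B2: "op_fun_spec f A B2"
    and K: "unit_ball_bounded (poly_op c A) K" and y: "y \<in> l2" "norm_l2 y \<le> 1"
  shows "norm_l2 (\<lambda>n. B1 y n - B2 y n) \<le> 2 * (SUP t\<in>{num_lo A..num_hi A}. \<bar>poly_real c t - f t\<bar>)"
proof -
  let ?\<sigma> = "SUP t\<in>{num_lo A..num_hi A}. \<bar>poly_real c t - f t\<bar>"
    and ?d1 = "op_diff (poly_op c A) B1 y" and ?d2 = "op_diff (poly_op c A) B2 y"
  have "B1 y \<in> l2" "B2 y \<in> l2"
    using B1 B2 y by (simp_all add: op_fun_spec_def bounded_op_def)
  then have d_l2: "?d1 \<in> l2" "?d2 \<in> l2"
    using y K unfolding op_diff_def unit_ball_bounded_def by (auto intro: l2_diff)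
  have d_small: "norm_l2 ?d1 \<le> ?\<sigma>" "norm_l2 ?d2 \<le> ?\<sigma>"
    using norm_op_fun_spec_diff_le[OF B1 K y] norm_op_fun_spec_diff_le[OF B2 K y] by simp_all
  have "(\<lambda>n. B1 y n - B2 y n) = (\<lambda>n. ?d2 n - ?d1 n)"
    by (simp add: op_diff_def)
  then have "(norm_l2 (\<lambda>n. B1 y n - B2 y n))\<^sup>2 \<le> 2 * (norm_l2 ?d2)\<^sup>2 + 2 * (norm_l2 ?d1)\<^sup>2"
    using power2_norm_l2_diff_le[OF d_l2(2,1)] by simp
  also have "\<dots> \<le> 2 * ?\<sigma>\<^sup>2 + 2 * ?\<sigma>\<^sup>2"
    using d_small norm_l2_nonneg[OF d_l2(1)] norm_l2_nonneg[OF d_l2(2)]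
    by (intro add_mono mult_left_mono power_mono) auto
  also have "\<dots> = (2 * ?\<sigma>)\<^sup>2"
    by (simp add: power2_eq_square)
  finally show ?thesis
    by (rule power2_le_imp_le) (use d_small(1) norm_l2_nonneg[OF d_l2(1)] in linarith)
qed

lemma op_fun_spec_unique:
  assumes f: "continuous_on {num_lo A..num_hi A} f" and range: "num_lo A \<le> num_hi A"
    and poly_bounded: "\<And>c. \<exists>K. unit_ball_bounded (poly_op c A) K"
    and B1: "op_fun_spec f A B1" and B2: "op_fun_spec f A B2"
  shows "B1 = B2"
proof (rule bounded_op_eqI_unit_ball)
  show "bounded_op B1" "bounded_op B2"
    using B1 B2 by (simp_all add: op_fun_spec_def)
  then show "B1 y = B2 y" if "y \<in> l2" "norm_l2 y \<le> 1" for y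
  proof (intro l2_eqI_norm_diff_le)
    fix \<epsilon> :: real assume "0 < \<epsilon>"
    then obtain cs where cs: "\<And>t. t \<in> {num_lo A..num_hi A} \<Longrightarrow> \<bar>poly_real cs t - f t\<bar> < \<epsilon> / 2"
      using exists_poly_real_approx[OF f, of "\<epsilon> / 2"] by auto
    have "(SUP t\<in>{num_lo A..num_hi A}. \<bar>poly_real cs t - f t\<bar>) \<le> \<epsilon> / 2"
      using range cs by (intro cSUP_least) (auto intro: less_imp_le)
    moreover obtain K where "unit_ball_bounded (poly_op cs A) K"
      using poly_bounded by blast
    ultimately show "norm_l2 (\<lambda>n. B1 y n - B2 y n) \<le> \<epsilon>"
      using norm_diff_op_fun_spec_le[OF B1 B2 _ that] by fastforce
  qed (use that in \<open>simp_all add: bounded_op_def\<close>)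
  show "B1 x = B2 x" if "x \<notin> l2" for x
    using that B1 B2 by (simp add: op_fun_spec_def)
qed

section \<open>Functional calculus of \<open>\<eta> I + L e\<^sub>0 \<otimes> e\<^sub>0\<close>\<close>

definition shifted_rank_one :: "real \<Rightarrow> real \<Rightarrow> vec \<Rightarrow> op" where
  "shifted_rank_one \<eta> L u = (\<lambda>x m. complex_of_real \<eta> * x m + complex_of_real L * tensor u u x m)"

text \<open>The second unit vector \<open>e\<^sub>1\<close> only serves to show that \<open>\<eta>\<close> belongs to the numerical range.\<close>

locale orthonormal_pair =
  fixes e0 e1 :: vec
  assumes e0_l2: "e0 \<in> l2" and e1_l2: "e1 \<in> l2"
    and e0_unit: "inner_l2 e0 e0 = 1" and e1_unit: "inner_l2 e1 e1 = 1"
    and orthogonal: "inner_l2 e1 e0 = 0"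
begin

definition proj_comb :: "complex \<Rightarrow> complex \<Rightarrow> op" where
  "proj_comb a b = (\<lambda>x m. a * x m + b * (inner_l2 x e0 * e0 m))"

lemma proj_comb_l2: "x \<in> l2 \<Longrightarrow> proj_comb a b x \<in> l2"
  unfolding proj_comb_def using l2_lincomb[OF _ e0_l2, of x a "b * inner_l2 x e0"]
  by (simp add: mult.assoc)

lemma inner_proj_comb: "x \<in> l2 \<Longrightarrow> inner_l2 (proj_comb a b x) e0 = (a + b) * inner_l2 x e0"
  unfolding proj_comb_def
  using inner_l2_lincomb_left[OF _ e0_l2 e0_l2, of x a "b * inner_l2 x e0"]
  by (simp add: e0_unit mult.assoc algebra_simps)

lemma proj_comb_proj_comb:
  assumes "x \<in> l2"
  shows "proj_comb a b (proj_comb c d x) = proj_comb (a * c) (a * d + b * (c + d)) x"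
proof
  fix m
  have "proj_comb a b (proj_comb c d x) m = a * proj_comb c d x m + b * ((c + d) * inner_l2 x e0 * e0 m)"
    by (simp add: proj_comb_def[of a b] inner_proj_comb[OF assms])
  then show "proj_comb a b (proj_comb c d x) m = proj_comb (a * c) (a * d + b * (c + d)) x m"
    by (simp add: proj_comb_def algebra_simps)
qed

lemma shifted_rank_one_eq: "shifted_rank_one \<eta> L e0 = proj_comb (of_real \<eta>) (of_real L)"
  by (simp add: shifted_rank_one_def proj_comb_def tensor_def)

lemma funpow_shifted_rank_one:
  "x \<in> l2 \<Longrightarrow> (shifted_rank_one \<eta> L e0 ^^ i) x
     = proj_comb (of_real (\<eta> ^ i)) (of_real ((\<eta> + L) ^ i - \<eta> ^ i)) x"
proof (induction i)
  case (Suc i)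
  then show ?case
    by (simp add: shifted_rank_one_eq proj_comb_proj_comb algebra_simps)
qed (simp add: proj_comb_def)

lemma norm_e0: "norm_l2 e0 = 1" and norm_e1: "norm_l2 e1 = 1"
  using norm_l2_eq_1I e0_l2 e0_unit e1_l2 e1_unit by auto

lemma power2_norm_orthogonal_sum:
  assumes w: "w \<in> l2" "inner_l2 w e0 = 0"
  shows "(norm_l2 (\<lambda>m. c * w m + d * e0 m))\<^sup>2 = (cmod c)\<^sup>2 * (norm_l2 w)\<^sup>2 + (cmod d)\<^sup>2"
proof -
  have l2: "(\<lambda>m. c * w m + d * e0 m) \<in> l2"
    by (rule l2_lincomb[OF w(1) e0_l2])
  have ew: "inner_l2 e0 w = 0"
    using inner_l2_commute[OF w(1) e0_l2] w(2) by simp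
  have "inner_l2 (\<lambda>m. c * w m + d * e0 m) (\<lambda>m. c * w m + d * e0 m)
      = c * inner_l2 w (\<lambda>m. c * w m + d * e0 m) + d * inner_l2 e0 (\<lambda>m. c * w m + d * e0 m)"
    by (rule inner_l2_lincomb_left[OF w(1) e0_l2 l2])
  also have "\<dots> = c * (cnj c * inner_l2 w w + cnj d * inner_l2 w e0)
      + d * (cnj c * inner_l2 e0 w + cnj d * inner_l2 e0 e0)"
    by (simp add: inner_l2_lincomb_right[OF w(1) e0_l2 w(1)] inner_l2_lincomb_right[OF w(1) e0_l2 e0_l2])
  also have "\<dots> = (c * cnj c) * of_real ((norm_l2 w)\<^sup>2) + d * cnj d"
    by (simp add: w(2) ew inner_l2_self[OF w(1)] e0_unit)
  finally have "inner_l2 (\<lambda>m. c * w m + d * e0 m) (\<lambda>m. c * w m + d * e0 m)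
      = of_real ((cmod c)\<^sup>2 * (norm_l2 w)\<^sup>2 + (cmod d)\<^sup>2)"
    by (simp add: complex_norm_square[symmetric] del: of_real_power)
  then show ?thesis
    using inner_l2_self[OF l2] by (metis of_real_eq_iff)
qed

lemma
  assumes x: "x \<in> l2"
  shows power2_norm_proj_comb: "(norm_l2 (proj_comb a b x))\<^sup>2
      = (cmod a)\<^sup>2 * ((norm_l2 x)\<^sup>2 - (cmod (inner_l2 x e0))\<^sup>2) + (cmod (a + b))\<^sup>2 * (cmod (inner_l2 x e0))\<^sup>2"
    and norm_inner_e0_le: "(cmod (inner_l2 x e0))\<^sup>2 \<le> (norm_l2 x)\<^sup>2"
proof -
  define p where "p = inner_l2 x e0"
  define w where "w = (\<lambda>m. x m - p * e0 m)"
  have w_l2: "w \<in> l2"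
    unfolding w_def by (rule l2_diff[OF x l2_scale[OF e0_l2]])
  have "inner_l2 w e0 = 0"
    unfolding w_def p_def using inner_l2_lincomb_left[OF x e0_l2 e0_l2, of 1 "- inner_l2 x e0"]
    by (simp add: e0_unit)
  note pythagoras = power2_norm_orthogonal_sum[OF w_l2 this]
  have norm_x: "(norm_l2 x)\<^sup>2 = (norm_l2 w)\<^sup>2 + (cmod p)\<^sup>2"
    using pythagoras[of 1 p] by (simp add: w_def)
  have "proj_comb a b x = (\<lambda>m. a * w m + ((a + b) * p) * e0 m)"
    by (rule ext) (simp add: proj_comb_def w_def p_def algebra_simps)
  then show "(norm_l2 (proj_comb a b x))\<^sup>2
      = (cmod a)\<^sup>2 * ((norm_l2 x)\<^sup>2 - (cmod (inner_l2 x e0))\<^sup>2) + (cmod (a + b))\<^sup>2 * (cmod (inner_l2 x e0))\<^sup>2"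
    by (simp add: pythagoras norm_x norm_mult power_mult_distrib p_def)
  show "(cmod (inner_l2 x e0))\<^sup>2 \<le> (norm_l2 x)\<^sup>2"
    using norm_x by (simp add: p_def)
qed

lemma norm_proj_comb_le:
  assumes x: "x \<in> l2"
  shows "norm_l2 (proj_comb a b x) \<le> max (cmod a) (cmod (a + b)) * norm_l2 x"
proof -
  let ?M = "max (cmod a) (cmod (a + b))"
  have "(norm_l2 (proj_comb a b x))\<^sup>2
      \<le> ?M\<^sup>2 * ((norm_l2 x)\<^sup>2 - (cmod (inner_l2 x e0))\<^sup>2) + ?M\<^sup>2 * (cmod (inner_l2 x e0))\<^sup>2"
    unfolding power2_norm_proj_comb[OF x]
    using norm_inner_e0_le[OF x] by (intro add_mono mult_right_mono power_mono) auto
  also have "\<dots> = (?M * norm_l2 x)\<^sup>2"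
    by (simp add: algebra_simps power_mult_distrib)
  finally show ?thesis
    by (rule power2_le_imp_le) (simp add: norm_l2_nonneg[OF x] le_max_iff_disj)
qed

lemma norm_proj_comb_le_unit_ball:
  assumes "x \<in> l2" "norm_l2 x \<le> 1"
  shows "norm_l2 (proj_comb a b x) \<le> max (cmod a) (cmod (a + b))"
proof -
  have "norm_l2 (proj_comb a b x) \<le> max (cmod a) (cmod (a + b)) * norm_l2 x"
    by (rule norm_proj_comb_le[OF assms(1)])
  also have "\<dots> \<le> max (cmod a) (cmod (a + b))"
    using assms norm_l2_nonneg[OF assms(1)] by (intro mult_left_le) (auto simp: le_max_iff_disj)
  finally show ?thesis .
qed

lemma bounded_op_proj_comb: "bounded_op (\<lambda>x. if x \<in> l2 then proj_comb a b x else (\<lambda>_. 0))"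
  unfolding bounded_op_def
proof (intro conjI ballI allI exI)
  fix x y c d assume "x \<in> l2" "y \<in> l2"
  then show "(if (\<lambda>n. c * x n + d * y n) \<in> l2 then proj_comb a b (\<lambda>n. c * x n + d * y n) else (\<lambda>_. 0))
      = (\<lambda>n. c * (if x \<in> l2 then proj_comb a b x else (\<lambda>_. 0)) n
           + d * (if y \<in> l2 then proj_comb a b y else (\<lambda>_. 0)) n)"
    by (simp add: l2_lincomb proj_comb_def inner_l2_lincomb_left e0_l2 algebra_simps)
next
  fix x assume "x \<in> l2"
  then show "(if x \<in> l2 then proj_comb a b x else (\<lambda>_. 0)) \<in> l2"
    and "norm_l2 (if x \<in> l2 then proj_comb a b x else (\<lambda>_. 0)) \<le> max (cmod a) (cmod (a + b)) * norm_l2 x"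
    by (simp_all add: proj_comb_l2 norm_proj_comb_le)
qed

lemma
  assumes "0 \<le> L"
  shows num_lo_shifted_rank_one: "num_lo (shifted_rank_one \<eta> L e0) = \<eta>"
    and num_hi_shifted_rank_one: "num_hi (shifted_rank_one \<eta> L e0) = \<eta> + L"
proof -
  define R where "R = {Re (inner_l2 (shifted_rank_one \<eta> L e0 x) x) | x. x \<in> l2 \<and> norm_l2 x = 1}"
  have quadratic_form: "Re (inner_l2 (shifted_rank_one \<eta> L e0 x) x) = \<eta> * (norm_l2 x)\<^sup>2 + L * (cmod (inner_l2 x e0))\<^sup>2"
    if x: "x \<in> l2" for x
  proof -
    have "inner_l2 (shifted_rank_one \<eta> L e0 x) x
        = of_real \<eta> * inner_l2 x x + (of_real L * inner_l2 x e0) * inner_l2 e0 x"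
      using inner_l2_lincomb_left[OF x e0_l2 x, of "of_real \<eta>" "of_real L * inner_l2 x e0"]
      by (simp add: shifted_rank_one_def tensor_def mult.assoc)
    then show ?thesis
      by (simp add: inner_l2_self[OF x] inner_l2_commute[OF x e0_l2] mult.assoc
          complex_norm_square[symmetric] del: of_real_power)
  qed
  have extremes: "\<eta> \<in> R" "\<eta> + L \<in> R"
    unfolding R_def using quadratic_form[OF e1_l2] quadratic_form[OF e0_l2] norm_e0 norm_e1 orthogonal e0_unit e0_l2 e1_l2
    by force+
  have bounds: "\<eta> \<le> r \<and> r \<le> \<eta> + L" if "r \<in> R" for r
  proof -
    obtain x where x: "x \<in> l2" "norm_l2 x = 1" "r = Re (inner_l2 (shifted_rank_one \<eta> L e0 x) x)"
      using \<open>r \<in> R\<close> R_def by auto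
    have "(cmod (inner_l2 x e0))\<^sup>2 \<le> 1"
      using norm_inner_e0_le[OF x(1)] x(2) by simp
    then show ?thesis
      using quadratic_form[OF x(1)] x assms by (simp add: mult_left_le)
  qed
  show "num_lo (shifted_rank_one \<eta> L e0) = \<eta>"
    unfolding num_lo_def R_def[symmetric] by (rule cInf_eq_minimum[OF extremes(1)]) (use bounds in auto)
  show "num_hi (shifted_rank_one \<eta> L e0) = \<eta> + L"
    unfolding num_hi_def R_def[symmetric] by (rule cSup_eq_maximum[OF extremes(2)]) (use bounds in auto)
qed

lemma poly_op_shifted_rank_one:
  assumes x: "x \<in> l2"
  shows "poly_op c (shifted_rank_one \<eta> L e0) x
    = proj_comb (of_real (poly_real c \<eta>)) (of_real (poly_real c (\<eta> + L) - poly_real c \<eta>)) x"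
proof
  fix n
  have "poly_op c (shifted_rank_one \<eta> L e0) x n = (\<Sum>i<length c. of_real (c ! i)
      * (of_real (\<eta> ^ i) * x n + of_real ((\<eta> + L) ^ i - \<eta> ^ i) * (inner_l2 x e0 * e0 n)))"
    by (simp add: poly_op_def funpow_shifted_rank_one[OF x] proj_comb_def)
  also have "\<dots> = (\<Sum>i<length c. of_real (c ! i) * of_real (\<eta> ^ i)) * x n
      + (\<Sum>i<length c. of_real (c ! i) * of_real ((\<eta> + L) ^ i - \<eta> ^ i)) * (inner_l2 x e0 * e0 n)"
    by (simp only: distrib_left sum.distrib mult.assoc sum_distrib_right)
  also have "\<dots> = proj_comb (of_real (poly_real c \<eta>)) (of_real (poly_real c (\<eta> + L) - poly_real c \<eta>)) x n"
    unfolding proj_comb_def poly_real_def of_real_diff of_real_sum of_real_mult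
    by (simp only: right_diff_distrib sum_subtractf)
  finally show "poly_op c (shifted_rank_one \<eta> L e0) x n
    = proj_comb (of_real (poly_real c \<eta>)) (of_real (poly_real c (\<eta> + L) - poly_real c \<eta>)) x n" .
qed

lemma unit_ball_bounded_poly_op: "\<exists>K. unit_ball_bounded (poly_op c (shifted_rank_one \<eta> L e0)) K"
proof -
  let ?a = "of_real (poly_real c \<eta>) :: complex"
    and ?b = "of_real (poly_real c (\<eta> + L) - poly_real c \<eta>) :: complex"
  have "norm_l2 (poly_op c (shifted_rank_one \<eta> L e0) x) \<le> max (cmod ?a) (cmod (?a + ?b))"
    if "x \<in> l2" "norm_l2 x \<le> 1" for x
    using norm_proj_comb_le_unit_ball[OF that, of ?a ?b] by (simp add: poly_op_shifted_rank_one that(1))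
  then have "unit_ball_bounded (poly_op c (shifted_rank_one \<eta> L e0)) (max (cmod ?a) (cmod (?a + ?b)))"
    by (simp add: unit_ball_bounded_def poly_op_shifted_rank_one proj_comb_l2 del: of_real_diff)
  then show ?thesis ..
qed

lemma op_fun_spec_proj_comb:
  assumes "0 \<le> L" and f: "continuous_on {\<eta>..\<eta>+L} f"
  shows "op_fun_spec f (shifted_rank_one \<eta> L e0)
    (\<lambda>x. if x \<in> l2 then proj_comb (of_real (f \<eta>)) (of_real (f (\<eta> + L) - f \<eta>)) x else (\<lambda>_. 0))"
  unfolding op_fun_spec_def
proof (intro conjI allI impI)
  fix c
  let ?A = "shifted_rank_one \<eta> L e0"
    and ?B = "\<lambda>x. if x \<in> l2 then proj_comb (of_real (f \<eta>)) (of_real (f (\<eta> + L) - f \<eta>)) x else (\<lambda>_. 0)"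
  define d1 where "d1 = poly_real c \<eta> - f \<eta>"
  define d2 where "d2 = poly_real c (\<eta> + L) - f (\<eta> + L)"
  have "continuous_on {\<eta>..\<eta>+L} (\<lambda>t. \<bar>poly_real c t - f t\<bar>)"
    unfolding poly_real_def by (intro continuous_intros f)
  then have "bdd_above ((\<lambda>t. \<bar>poly_real c t - f t\<bar>) ` {\<eta>..\<eta>+L})"
    by (intro bounded_imp_bdd_above compact_imp_bounded compact_continuous_image compact_Icc)
  then have endpoints: "max \<bar>d1\<bar> \<bar>d2\<bar> \<le> (SUP t\<in>{num_lo ?A..num_hi ?A}. \<bar>poly_real c t - f t\<bar>)"
    unfolding num_lo_shifted_rank_one[OF assms(1)] num_hi_shifted_rank_one[OF assms(1)] d1_def d2_def
    using assms(1) by (intro max.boundedI cSUP_upper) auto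
  have "op_diff (poly_op c ?A) ?B x = proj_comb (of_real d1) (of_real (d2 - d1)) x" if "x \<in> l2" for x
    using that by (auto simp: op_diff_def poly_op_shifted_rank_one proj_comb_def d1_def d2_def algebra_simps)
  then have "opnorm (op_diff (poly_op c ?A) ?B) \<le> max \<bar>d1\<bar> \<bar>d2\<bar>"
    using norm_proj_comb_le_unit_ball[of _ "of_real d1" "of_real (d2 - d1)"]
    by (intro opnorm_le) (simp del: of_real_diff flip: of_real_add)
  then show "opnorm (op_diff (poly_op c ?A) ?B) \<le> (SUP t\<in>{num_lo ?A..num_hi ?A}. \<bar>poly_real c t - f t\<bar>)"
    using endpoints by linarith
qed (simp_all add: bounded_op_proj_comb)

lemma op_fun_shifted_rank_one:
  assumes "0 \<le> L" "continuous_on {\<eta>..\<eta>+L} f"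
  shows "op_fun f (shifted_rank_one \<eta> L e0)
    = (\<lambda>x. if x \<in> l2 then proj_comb (of_real (f \<eta>)) (of_real (f (\<eta> + L) - f \<eta>)) x else (\<lambda>_. 0))"
proof (rule op_fun_eqI)
  show "op_fun_spec f (shifted_rank_one \<eta> L e0)
    (\<lambda>x. if x \<in> l2 then proj_comb (of_real (f \<eta>)) (of_real (f (\<eta> + L) - f \<eta>)) x else (\<lambda>_. 0))"
    by (rule op_fun_spec_proj_comb[OF assms])
  then show "B = (\<lambda>x. if x \<in> l2 then proj_comb (of_real (f \<eta>)) (of_real (f (\<eta> + L) - f \<eta>)) x else (\<lambda>_. 0))"
    if "op_fun_spec f (shifted_rank_one \<eta> L e0) B" for B
    using assms that
    by (intro op_fun_spec_unique)
      (simp_all add: num_lo_shifted_rank_one num_hi_shifted_rank_one unit_ball_bounded_poly_op)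
qed

lemma op_powr_shifted_rank_one_e0:
  assumes "0 < \<eta>" "0 \<le> L"
  shows "op_powr (shifted_rank_one \<eta> L e0) a (\<lambda>m. k * e0 m) = (\<lambda>m. of_real ((\<eta> + L) powr a) * k * e0 m)"
proof -
  have "continuous_on {\<eta>..\<eta>+L} (\<lambda>t. t powr a)"
    using assms(1) by (intro continuous_intros) auto
  moreover have "inner_l2 (\<lambda>m. k * e0 m) e0 = k"
    by (simp add: inner_l2_scale_left e0_l2 e0_unit)
  ultimately show ?thesis
    unfolding op_powr_def by (simp add: op_fun_shifted_rank_one[OF assms(2)] l2_scale e0_l2
        proj_comb_def algebra_simps)
qed

lemma op_powr_weighted_tensor_sum:
  assumes "orthonormal_seq f" "summable (\<lambda>n. (cmod (D n))\<^sup>2)" "h \<in> l2" "0 < \<eta>" "0 \<le> L"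
  shows "op_powr (shifted_rank_one \<eta> L e0) a (weighted_tensor_sum f D e0 h)
    = weighted_tensor_sum f (\<lambda>n. of_real ((\<eta> + L) powr a) * D n) e0 h"
  using op_powr_shifted_rank_one_e0[OF assms(4,5)]
  by (simp add: weighted_tensor_sum_def coeff_functional_scale[OF assms(1-3)] mult.assoc)

end

section \<open>The rank-one series\<close>

lemma
  assumes e: "orthonormal_seq e" and v: "v \<in> l2" and c: "\<And>n. 0 \<le> c n" "\<And>n. c n \<le> C"
  shows summable_weighted_coeffs: "summable (\<lambda>n. (cmod (of_real (c n) * inner_l2 v (e n)))\<^sup>2)"
    and sqrt_suminf_weighted_coeffs_le:
      "sqrt (\<Sum>n. (cmod (of_real (c n) * inner_l2 v (e n)))\<^sup>2) \<le> C * norm_l2 v"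
proof -
  have C: "0 \<le> C"
    using c[of 0] by linarith
  have pointwise: "(cmod (of_real (c n) * inner_l2 v (e n)))\<^sup>2 \<le> C\<^sup>2 * (cmod (inner_l2 v (e n)))\<^sup>2" for n
    using c[of n] by (simp add: norm_mult power_mult_distrib mult_right_mono power_mono)
  note bessel = summable_bessel[OF e v] bessel_inequality[OF e v]
  show summable: "summable (\<lambda>n. (cmod (of_real (c n) * inner_l2 v (e n)))\<^sup>2)"
    by (rule summable_comparison_test[OF _ summable_mult[OF bessel(1), of "C\<^sup>2"]]) (use pointwise in simp)
  have "(\<Sum>n. (cmod (of_real (c n) * inner_l2 v (e n)))\<^sup>2) \<le> (\<Sum>n. C\<^sup>2 * (cmod (inner_l2 v (e n)))\<^sup>2)"
    by (rule suminf_le[OF pointwise summable summable_mult[OF bessel(1)]])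
  also have "\<dots> \<le> C\<^sup>2 * (norm_l2 v)\<^sup>2"
    using bessel by (simp add: suminf_mult mult_left_mono)
  finally show "sqrt (\<Sum>n. (cmod (of_real (c n) * inner_l2 v (e n)))\<^sup>2) \<le> C * norm_l2 v"
    using C norm_l2_nonneg[OF v] by (simp add: real_sqrt_le_iff real_le_lsqrt power_mult_distrib)
qed

lemma rank_one_series_bounds:
  fixes s C L M a :: real and e f :: "nat \<Rightarrow> vec" and v :: vec and c :: "nat \<Rightarrow> real"
  assumes s: "0 < s" and e: "orthonormal_basis e" and f: "orthonormal_basis f" and v: "v \<in> l2"
    and c: "\<And>n. 0 \<le> c n" "\<And>n. c n \<le> C" and L: "0 < L" and a: "a \<le> 0"
    and M: "L powr a * C \<le> M"
  shows "\<exists>S. schatten_sums s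
              (\<lambda>n h m. complex_of_real (c n) * inner_l2 v (e n) * tensor (f n) (e 0) h m) S \<and>
            (\<forall>\<eta>>0. schatten_class s (\<lambda>h. op_powr (shifted_rank_one \<eta> L (e 0)) a (S h)) \<and>
                   schatten_norm s (\<lambda>h. op_powr (shifted_rank_one \<eta> L (e 0)) a (S h))
                     \<le> M * norm_l2 v) \<and>
            schatten_norm s S \<le> C * norm_l2 v"
proof -
  have e_seq: "orthonormal_seq e" and f_seq: "orthonormal_seq f"
    using e f by (simp_all add: orthonormal_basis_imp_seq)
  then interpret orthonormal_pair "e 0" "e 1"
    by unfold_locales (simp_all add: orthonormal_seq_def)
  define D where "D n = complex_of_real (c n) * inner_l2 v (e n)" for n
  define S where "S = weighted_tensor_sum f D (e 0)"
  have D: "summable (\<lambda>n. (cmod (D n))\<^sup>2)" "sqrt (\<Sum>n. (cmod (D n))\<^sup>2) \<le> C * norm_l2 v"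
    unfolding D_def using summable_weighted_coeffs[OF e_seq v c] sqrt_suminf_weighted_coeffs_le[OF e_seq v c]
    by simp_all
  note schatten = schatten_class_weighted_tensor_sum[OF f_seq _ s e0_l2 norm_e0]
    schatten_norm_weighted_tensor_sum_le[OF f_seq _ s e0_l2 norm_e0]
  have "schatten_sums s (\<lambda>n h m. D n * tensor (f n) (e 0) h m) S"
    unfolding S_def by (rule schatten_sums_weighted_tensor_sum[OF f_seq D(1) s e0_l2 norm_e0])
  moreover have "schatten_norm s S \<le> C * norm_l2 v"
    using schatten(2)[OF D(1), of S] D(2) by (simp add: S_def)
  moreover have "schatten_class s (\<lambda>h. op_powr (shifted_rank_one \<eta> L (e 0)) a (S h)) \<and>
      schatten_norm s (\<lambda>h. op_powr (shifted_rank_one \<eta> L (e 0)) a (S h)) \<le> M * norm_l2 v"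
    if \<eta>: "0 < \<eta>" for \<eta>
  proof -
    define \<kappa> where "\<kappa> = (\<eta> + L) powr a"
    have \<kappa>: "0 \<le> \<kappa>" "\<kappa> \<le> L powr a"
      unfolding \<kappa>_def using \<eta> L a by (auto intro: powr_mono2')
    have T: "op_powr (shifted_rank_one \<eta> L (e 0)) a (S h) = weighted_tensor_sum f (\<lambda>n. of_real \<kappa> * D n) (e 0) h"
      if "h \<in> l2" for h
      unfolding S_def \<kappa>_def by (rule op_powr_weighted_tensor_sum[OF f_seq D(1) that \<eta> less_imp_le[OF L]])
    have "\<kappa> * sqrt (\<Sum>n. (cmod (D n))\<^sup>2) \<le> L powr a * (C * norm_l2 v)"
      using \<kappa> D(2) suminf_nonneg[OF D(1)] by (intro mult_mono) auto
    also have "\<dots> \<le> M * norm_l2 v"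
      using M norm_l2_nonneg[OF v] by (simp add: mult.assoc[symmetric] mult_right_mono)
    finally show ?thesis
      using schatten[OF summable_scaled_coeffs[OF D(1) \<kappa>(1)] T]
      unfolding sqrt_suminf_scaled_coeffs[OF D(1) \<kappa>(1)] by simp
  qed
  ultimately show ?thesis
    unfolding D_def by blast
qed

lemma term_le_suminf:
  fixes g :: "nat \<Rightarrow> real"
  assumes "summable g" "\<And>n. 0 \<le> g n"
  shows "g n \<le> suminf g"
  using sum_le_suminf[OF assms(1), of "{n}"] assms(2) by simp

lemma le_suminf_powr_root:
  fixes g :: "nat \<Rightarrow> real"
  assumes "0 < p" "\<And>n. 0 \<le> g n" "summable (\<lambda>n. g n powr p)"
  shows "g n \<le> (\<Sum>n. g n powr p) powr (1 / p)"
proof -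
  have "(g n powr p) powr (1 / p) \<le> (\<Sum>n. g n powr p) powr (1 / p)"
    using assms by (intro powr_mono2 term_le_suminf) auto
  then show ?thesis
    using assms by (simp add: powr_powr)
qed

lemma rank_one_series_summable_weights:
  fixes q r s :: real and e f :: "nat \<Rightarrow> vec" and v :: vec and lam rho :: "nat \<Rightarrow> real"
  assumes q: "1 \<le> q" and r: "0 < r" and s: "0 < s"
    and e: "orthonormal_basis e" and f: "orthonormal_basis f" and v: "v \<in> l2"
    and lam: "\<And>n. 0 < lam n" "summable lam" and rho: "\<And>n. 0 < rho n" "summable rho"
  shows "\<exists>S. schatten_sums s
              (\<lambda>n h m. complex_of_real (lam n powr (1/2 - 1/(2*q)) * rho n powr (1/(2*r)))
                 * inner_l2 v (e n) * tensor (f n) (e 0) h m) S \<and>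
            (\<forall>\<eta>>0. schatten_class s (\<lambda>h. op_powr (shifted_rank_one \<eta> (\<Sum>n. lam n) (e 0)) (1/(2*q) - 1/2) (S h)) \<and>
                   schatten_norm s (\<lambda>h. op_powr (shifted_rank_one \<eta> (\<Sum>n. lam n) (e 0)) (1/(2*q) - 1/2) (S h))
                     \<le> (\<Sum>n. rho n) powr (1/(2*r)) * norm_l2 v) \<and>
            schatten_norm s S \<le> (\<Sum>n. lam n) powr (1/2 - 1/(2*q)) * (\<Sum>n. rho n) powr (1/(2*r)) * norm_l2 v"
proof (rule rank_one_series_bounds[OF s e f v])
  let ?\<Lambda> = "\<Sum>n. lam n" and ?P = "\<Sum>n. rho n"
  have exponent: "0 \<le> 1/2 - 1/(2*q)"
    using q by (simp add: field_simps)
  show "0 < ?\<Lambda>"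
    using suminf_pos[OF lam(2,1)] .
  show "0 \<le> lam n powr (1/2 - 1/(2*q)) * rho n powr (1/(2*r))" for n
    by simp
  show "lam n powr (1/2 - 1/(2*q)) * rho n powr (1/(2*r)) \<le> ?\<Lambda> powr (1/2 - 1/(2*q)) * ?P powr (1/(2*r))"
    for n
  proof -
    have "lam n \<le> ?\<Lambda>" "rho n \<le> ?P"
      using lam rho by (simp_all add: term_le_suminf less_imp_le)
    then show ?thesis
      using exponent r lam rho by (intro mult_mono powr_mono2) (auto intro: less_imp_le)
  qed
  show "1/(2*q) - 1/2 \<le> 0"
    using exponent by simp
  have "?\<Lambda> powr (1/(2*q) - 1/2) * ?\<Lambda> powr (1/2 - 1/(2*q)) = 1"
    using \<open>0 < ?\<Lambda>\<close> by (simp flip: powr_add)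
  then show "?\<Lambda> powr (1/(2*q) - 1/2) * (?\<Lambda> powr (1/2 - 1/(2*q)) * ?P powr (1/(2*r))) \<le> ?P powr (1/(2*r))"
    by (simp add: mult.assoc[symmetric])
qed

lemma rank_one_series_lp_weights:
  fixes q r s :: real and e f :: "nat \<Rightarrow> vec" and v :: vec and gam w :: "nat \<Rightarrow> real"
  assumes q: "1 < q" and r: "0 < r" and s: "0 < s"
    and e: "orthonormal_basis e" and f: "orthonormal_basis f" and v: "v \<in> l2"
    and gam: "\<And>n. 0 < gam n" "summable (\<lambda>n. gam n powr (2*q/(q-1)))"
    and w: "\<And>n. 0 < w n" "summable (\<lambda>n. w n powr (2*r))"
  shows "\<exists>S. schatten_sums s
              (\<lambda>n h m. complex_of_real (gam n * w n) * inner_l2 v (e n) * tensor (f n) (e 0) h m) S \<and>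
            (\<forall>\<eta>>0. schatten_class s (\<lambda>h. op_powr (shifted_rank_one \<eta> (\<Sum>n. gam n powr (2*q/(q-1))) (e 0))
                                          (1/(2*q) - 1/2) (S h)) \<and>
                   schatten_norm s (\<lambda>h. op_powr (shifted_rank_one \<eta> (\<Sum>n. gam n powr (2*q/(q-1))) (e 0))
                                          (1/(2*q) - 1/2) (S h))
                     \<le> (\<Sum>n. w n powr (2*r)) powr (1/(2*r)) * norm_l2 v) \<and>
            schatten_norm s S \<le> (\<Sum>n. gam n powr (2*q/(q-1))) powr ((q-1)/(2*q))
                                   * (\<Sum>n. w n powr (2*r)) powr (1/(2*r)) * norm_l2 v"
proof (rule rank_one_series_bounds[OF s e f v])
  let ?G = "\<Sum>n. gam n powr (2*q/(q-1))" and ?W = "\<Sum>n. w n powr (2*r)"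
  show "0 < ?G"
    by (rule suminf_pos[OF gam(2)]) (metis gam(1) order_less_irrefl powr_gt_zero)
  have "gam n \<le> ?G powr (1 / (2*q/(q-1)))" for n
    using q gam by (intro le_suminf_powr_root) (auto intro: less_imp_le)
  moreover have "1 / (2*q/(q-1)) = (q-1)/(2*q)"
    by simp
  moreover have "w n \<le> ?W powr (1/(2*r))" for n
    using r w le_suminf_powr_root[of "2*r" w] by (simp add: less_imp_le)
  ultimately show "gam n * w n \<le> ?G powr ((q-1)/(2*q)) * ?W powr (1/(2*r))" for n
    using gam w by (intro mult_mono) (auto intro: less_imp_le)
  show "0 \<le> gam n * w n" for n
    using gam(1)[of n] w(1)[of n] by simp
  show "1/(2*q) - 1/2 \<le> 0"
    using q by (simp add: field_simps)
  have "(1/(2*q) - 1/2) + (q-1)/(2*q) = 0"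
    using q by (simp add: field_simps)
  then have "?G powr (1/(2*q) - 1/2) * ?G powr ((q-1)/(2*q)) = 1"
    using \<open>0 < ?G\<close> by (simp flip: powr_add)
  then show "?G powr (1/(2*q) - 1/2) * (?G powr ((q-1)/(2*q)) * ?W powr (1/(2*r))) \<le> ?W powr (1/(2*r))"
    by (simp add: mult.assoc[symmetric])
qed

theorem theorem4p1:
  fixes q r s :: real and e f :: "nat \<Rightarrow> vec" and X :: op
  assumes "q \<ge> 1" and "r \<ge> 1" and "s \<ge> 1"
    and "1 / (2 * q) + 1 / (2 * r) = 1 / s"
    and "orthonormal_basis e" and "orthonormal_basis f"
    and "schatten_class s X"
  shows
   "(\<forall>lam rho :: nat \<Rightarrow> real.
       (\<forall>n. lam n > 0) \<and> (\<forall>n. rho n > 0) \<and> summable lam \<and> summable rho \<longrightarrow>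
       (\<exists>S. schatten_sums s
              (\<lambda>n. (\<lambda>h m. complex_of_real (lam n powr (1/2 - 1/(2*q)) * rho n powr (1/(2*r)))
                     * inner_l2 (X (f 0)) (e n) * tensor (f n) (e 0) h m)) S \<and>
            (\<forall>\<eta>>0. schatten_class s
                        (\<lambda>h. op_powr (\<lambda>x m. complex_of_real \<eta> * x m
                                  + complex_of_real (\<Sum>n. lam n) * tensor (e 0) (e 0) x m)
                                 (1/(2*q) - 1/2) (S h)) \<and>
                     schatten_norm s
                        (\<lambda>h. op_powr (\<lambda>x m. complex_of_real \<eta> * x m
                                  + complex_of_real (\<Sum>n. lam n) * tensor (e 0) (e 0) x m)
                                 (1/(2*q) - 1/2) (S h))
                      \<le> (\<Sum>n. rho n) powr (1/(2*r)) * norm_l2 (X (f 0))) \<and>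
            schatten_norm s S
              \<le> (\<Sum>n. lam n) powr (1/2 - 1/(2*q)) * (\<Sum>n. rho n) powr (1/(2*r))
                 * norm_l2 (X (f 0))))
    \<and>
    (q > 1 \<longrightarrow>
     (\<forall>gam w :: nat \<Rightarrow> real.
       (\<forall>n. gam n > 0) \<and> (\<forall>n. w n > 0) \<and>
       summable (\<lambda>n. gam n powr (2*q/(q-1))) \<and> summable (\<lambda>n. w n powr (2*r)) \<longrightarrow>
       (\<exists>S. schatten_sums s
              (\<lambda>n. (\<lambda>h m. complex_of_real (gam n * w n)
                     * inner_l2 (X (f 0)) (e n) * tensor (f n) (e 0) h m)) S \<and>
            (\<forall>\<eta>>0. schatten_class s
                        (\<lambda>h. op_powr (\<lambda>x m. complex_of_real \<eta> * x m
                                  + complex_of_real (\<Sum>n. gam n powr (2*q/(q-1))) * tensor (e 0) (e 0) x m)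
                                 (1/(2*q) - 1/2) (S h)) \<and>
                     schatten_norm s
                        (\<lambda>h. op_powr (\<lambda>x m. complex_of_real \<eta> * x m
                                  + complex_of_real (\<Sum>n. gam n powr (2*q/(q-1))) * tensor (e 0) (e 0) x m)
                                 (1/(2*q) - 1/2) (S h))
                      \<le> (\<Sum>n. w n powr (2*r)) powr (1/(2*r)) * norm_l2 (X (f 0))) \<and>
            schatten_norm s S
              \<le> (\<Sum>n. gam n powr (2*q/(q-1))) powr ((q-1)/(2*q)) * (\<Sum>n. w n powr (2*r)) powr (1/(2*r))
                 * norm_l2 (X (f 0)))))"
proof -
  have v: "X (f 0) \<in> l2"
    using assms(6,7) by (simp add: schatten_class_def bounded_op_def orthonormal_basis_def)
  have r: "0 < r" and s: "0 < s"
    using assms(2,3) by simp_all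
  note part_i = rank_one_series_summable_weights[OF assms(1) r s assms(5,6) v, unfolded shifted_rank_one_def]
  note part_ii = rank_one_series_lp_weights[OF _ r s assms(5,6) v, unfolded shifted_rank_one_def]
  show ?thesis
    by (intro conjI allI impI; elim conjE; rule part_i part_ii) auto
qed

end
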